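(* Let $(A,m,i)$ be a monoid in $\mathcal V$, let $(M,\mu,\nu)$ be an $A$-bimodule, and let $d\colon A\to M$ be a morphism in $\mathcal V$ satisfying the Leibniz rule $d\circ m = d\cdot 1_A + 1_A\cdot d$ (as morphisms $A\otimes A\to M$). Then the following are equivalent: (i) $1_A\cdot d=\mu\circ(1_A\otimes d)\colon A\otimes A\to M$ is an epimorphism in $\mathcal V$; (ii) $d\cdot 1_A=\nu\circ(d\otimes 1_A)\colon A\otimes A\to M$ is an epimorphism in $\mathcal V$; (iii) $1_A\cdot d\cdot 1_A\colon A\otimes A\otimes A\to M$ is an epimorphism in $\mathcal V$.
   Context: $\mathcal V$ is a monoidal additive category: a monoidal category which is $\mathbf{Ab}$-enriched with finite biproducts, whose tensor product is additive in each variable, and which has finite limits and colimits. A monoid $(A,m,i)$ in $\mathcal V$ has multiplication $m\colon A\otimes A\to A$ and unit $i\colon I\to A$. An $A$-bimodule $(M,\mu,\nu)$ has left action $\mu\colon A\otimes M\to M$ and right action $\nu\colon M\otimes A\to M$, each satisfying associativity and unit axioms, and compatible with each other. Notation: for morphisms $f\colon X\to M$ and $g\colon Y\to A$, $g\cdot f:=\mu\circ(g\otimes f)\colon Y\otimes X\to M$ and $f\cdot g:=\nu\circ(f\otimes g)$; $1_A\cdot d\cdot 1_A$ denotes the morphism $A\otimes A\otimes A\to M$ obtained by applying $d$ to the middle factor and then both actions (associators suppressed). *)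

theory Defs
  imports Main
begin

text \<open>Objects have type 'o, morphisms type 'm; the actual objects and
morphisms form the carriers Obj and Arr.  Composition Comp g f is "g after f".
Operations are total functions, only meaningful on the carriers.\<close>

record ('o, 'm) moncat =
  Obj   :: "'o set"
  Arr   :: "'m set"
  Dom   :: "'m \<Rightarrow> 'o"
  Cod   :: "'m \<Rightarrow> 'o"
  Ide   :: "'o \<Rightarrow> 'm"
  Comp  :: "'m \<Rightarrow> 'm \<Rightarrow> 'm"
  Zm    :: "'o \<Rightarrow> 'o \<Rightarrow> 'm"
  Add   :: "'m \<Rightarrow> 'm \<Rightarrow> 'm"
  Neg   :: "'m \<Rightarrow> 'm"
  TOb   :: "'o \<Rightarrow> 'o \<Rightarrow> 'o"
  Tens  :: "'m \<Rightarrow> 'm \<Rightarrow> 'm"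
  Unit  :: "'o"
  Assoc :: "'o \<Rightarrow> 'o \<Rightarrow> 'o \<Rightarrow> 'm"
  LUnit :: "'o \<Rightarrow> 'm"
  RUnit :: "'o \<Rightarrow> 'm"

definition Hom :: "('o, 'm, 'x) moncat_scheme \<Rightarrow> 'o \<Rightarrow> 'o \<Rightarrow> 'm set" where
  "Hom C a b = {f \<in> Arr C. Dom C f = a \<and> Cod C f = b}"

definition is_category :: "('o, 'm, 'x) moncat_scheme \<Rightarrow> bool" where
  "is_category C \<longleftrightarrow>
     (\<forall>f\<in>Arr C. Dom C f \<in> Obj C \<and> Cod C f \<in> Obj C) \<and>
     (\<forall>a\<in>Obj C. Ide C a \<in> Hom C a a) \<and>
     (\<forall>f\<in>Arr C. \<forall>g\<in>Arr C. Cod C f = Dom C g \<longrightarrow> Comp C g f \<in> Hom C (Dom C f) (Cod C g)) \<and>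
     (\<forall>f\<in>Arr C. Comp C (Ide C (Cod C f)) f = f \<and> Comp C f (Ide C (Dom C f)) = f) \<and>
     (\<forall>f\<in>Arr C. \<forall>g\<in>Arr C. \<forall>h\<in>Arr C. Cod C f = Dom C g \<longrightarrow> Cod C g = Dom C h \<longrightarrow>
        Comp C h (Comp C g f) = Comp C (Comp C h g) f)"

definition is_iso :: "('o, 'm, 'x) moncat_scheme \<Rightarrow> 'm \<Rightarrow> bool" where
  "is_iso C f \<longleftrightarrow> f \<in> Arr C \<and> (\<exists>g \<in> Hom C (Cod C f) (Dom C f).
      Comp C g f = Ide C (Dom C f) \<and> Comp C f g = Ide C (Cod C f))"

definition is_epi :: "('o, 'm, 'x) moncat_scheme \<Rightarrow> 'm \<Rightarrow> bool" where
  "is_epi C f \<longleftrightarrow> f \<in> Arr C \<and> (\<forall>g\<in>Arr C. \<forall>h\<in>Arr C.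
      Dom C g = Cod C f \<longrightarrow> Dom C h = Cod C f \<longrightarrow> Cod C g = Cod C h \<longrightarrow>
      Comp C g f = Comp C h f \<longrightarrow> g = h)"

definition ab_enriched :: "('o, 'm, 'x) moncat_scheme \<Rightarrow> bool" where
  "ab_enriched C \<longleftrightarrow>
     (\<forall>a\<in>Obj C. \<forall>b\<in>Obj C.
        Zm C a b \<in> Hom C a b \<and>
        (\<forall>f\<in>Hom C a b. \<forall>g\<in>Hom C a b. Add C f g \<in> Hom C a b) \<and>
        (\<forall>f\<in>Hom C a b. Neg C f \<in> Hom C a b) \<and>
        (\<forall>f\<in>Hom C a b. \<forall>g\<in>Hom C a b. \<forall>h\<in>Hom C a b. Add C (Add C f g) h = Add C f (Add C g h)) \<and>
        (\<forall>f\<in>Hom C a b. \<forall>g\<in>Hom C a b. Add C f g = Add C g f) \<and>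
        (\<forall>f\<in>Hom C a b. Add C f (Zm C a b) = f) \<and>
        (\<forall>f\<in>Hom C a b. Add C f (Neg C f) = Zm C a b)) \<and>
     (\<forall>a\<in>Obj C. \<forall>b\<in>Obj C. \<forall>c\<in>Obj C.
        (\<forall>f1\<in>Hom C a b. \<forall>f2\<in>Hom C a b. \<forall>g\<in>Hom C b c.
            Comp C g (Add C f1 f2) = Add C (Comp C g f1) (Comp C g f2)) \<and>
        (\<forall>f\<in>Hom C a b. \<forall>g1\<in>Hom C b c. \<forall>g2\<in>Hom C b c.
            Comp C (Add C g1 g2) f = Add C (Comp C g1 f) (Comp C g2 f)))"

definition has_finite_biproducts :: "('o, 'm, 'x) moncat_scheme \<Rightarrow> bool" where
  "has_finite_biproducts C \<longleftrightarrow>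
     (\<exists>z\<in>Obj C. \<forall>a\<in>Obj C. (\<exists>!f. f \<in> Hom C z a) \<and> (\<exists>!f. f \<in> Hom C a z)) \<and>
     (\<forall>a\<in>Obj C. \<forall>b\<in>Obj C. \<exists>c\<in>Obj C. \<exists>p1\<in>Hom C c a. \<exists>p2\<in>Hom C c b.
        \<exists>i1\<in>Hom C a c. \<exists>i2\<in>Hom C b c.
        Comp C p1 i1 = Ide C a \<and> Comp C p2 i2 = Ide C b \<and>
        Comp C p1 i2 = Zm C b a \<and> Comp C p2 i1 = Zm C a b \<and>
        Add C (Comp C i1 p1) (Comp C i2 p2) = Ide C c)"

definition has_finite_limits :: "('o, 'm, 'x) moncat_scheme \<Rightarrow> bool" where
  "has_finite_limits C \<longleftrightarrow>
     (\<exists>t\<in>Obj C. \<forall>a\<in>Obj C. \<exists>!f. f \<in> Hom C a t) \<and>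
     (\<forall>a\<in>Obj C. \<forall>b\<in>Obj C. \<exists>c\<in>Obj C. \<exists>p1\<in>Hom C c a. \<exists>p2\<in>Hom C c b.
        \<forall>x\<in>Obj C. \<forall>f\<in>Hom C x a. \<forall>g\<in>Hom C x b.
          \<exists>!u. u \<in> Hom C x c \<and> Comp C p1 u = f \<and> Comp C p2 u = g) \<and>
     (\<forall>a\<in>Obj C. \<forall>b\<in>Obj C. \<forall>f\<in>Hom C a b. \<forall>g\<in>Hom C a b.
        \<exists>e\<in>Obj C. \<exists>k\<in>Hom C e a. Comp C f k = Comp C g k \<and>
          (\<forall>x\<in>Obj C. \<forall>h\<in>Hom C x a. Comp C f h = Comp C g h \<longrightarrow>
             (\<exists>!u. u \<in> Hom C x e \<and> Comp C k u = h)))"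

definition has_finite_colimits :: "('o, 'm, 'x) moncat_scheme \<Rightarrow> bool" where
  "has_finite_colimits C \<longleftrightarrow>
     (\<exists>t\<in>Obj C. \<forall>a\<in>Obj C. \<exists>!f. f \<in> Hom C t a) \<and>
     (\<forall>a\<in>Obj C. \<forall>b\<in>Obj C. \<exists>c\<in>Obj C. \<exists>i1\<in>Hom C a c. \<exists>i2\<in>Hom C b c.
        \<forall>x\<in>Obj C. \<forall>f\<in>Hom C a x. \<forall>g\<in>Hom C b x.
          \<exists>!u. u \<in> Hom C c x \<and> Comp C u i1 = f \<and> Comp C u i2 = g) \<and>
     (\<forall>a\<in>Obj C. \<forall>b\<in>Obj C. \<forall>f\<in>Hom C a b. \<forall>g\<in>Hom C a b.
        \<exists>e\<in>Obj C. \<exists>q\<in>Hom C b e. Comp C q f = Comp C q g \<and>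
          (\<forall>x\<in>Obj C. \<forall>h\<in>Hom C b x. Comp C h f = Comp C h g \<longrightarrow>
             (\<exists>!u. u \<in> Hom C e x \<and> Comp C u q = h)))"

definition is_monoidal :: "('o, 'm, 'x) moncat_scheme \<Rightarrow> bool" where
  "is_monoidal C \<longleftrightarrow>
     Unit C \<in> Obj C \<and>
     (\<forall>a\<in>Obj C. \<forall>b\<in>Obj C. TOb C a b \<in> Obj C) \<and>
     (\<forall>f\<in>Arr C. \<forall>g\<in>Arr C. Tens C f g \<in> Hom C (TOb C (Dom C f) (Dom C g)) (TOb C (Cod C f) (Cod C g))) \<and>
     (\<forall>a\<in>Obj C. \<forall>b\<in>Obj C. Tens C (Ide C a) (Ide C b) = Ide C (TOb C a b)) \<and>
     (\<forall>f\<in>Arr C. \<forall>g\<in>Arr C. \<forall>h\<in>Arr C. \<forall>k\<in>Arr C. Cod C f = Dom C g \<longrightarrow> Cod C h = Dom C k \<longrightarrow>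
        Tens C (Comp C g f) (Comp C k h) = Comp C (Tens C g k) (Tens C f h)) \<and>
     (\<forall>a\<in>Obj C. \<forall>b\<in>Obj C. \<forall>c\<in>Obj C.
        Assoc C a b c \<in> Hom C (TOb C (TOb C a b) c) (TOb C a (TOb C b c)) \<and> is_iso C (Assoc C a b c)) \<and>
     (\<forall>f\<in>Arr C. \<forall>g\<in>Arr C. \<forall>h\<in>Arr C.
        Comp C (Assoc C (Cod C f) (Cod C g) (Cod C h)) (Tens C (Tens C f g) h) =
        Comp C (Tens C f (Tens C g h)) (Assoc C (Dom C f) (Dom C g) (Dom C h))) \<and>
     (\<forall>a\<in>Obj C. LUnit C a \<in> Hom C (TOb C (Unit C) a) a \<and> is_iso C (LUnit C a)) \<and>
     (\<forall>a\<in>Obj C. RUnit C a \<in> Hom C (TOb C a (Unit C)) a \<and> is_iso C (RUnit C a)) \<and>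
     (\<forall>f\<in>Arr C. Comp C (LUnit C (Cod C f)) (Tens C (Ide C (Unit C)) f) = Comp C f (LUnit C (Dom C f))) \<and>
     (\<forall>f\<in>Arr C. Comp C (RUnit C (Cod C f)) (Tens C f (Ide C (Unit C))) = Comp C f (RUnit C (Dom C f))) \<and>
     (\<forall>a\<in>Obj C. \<forall>b\<in>Obj C. \<forall>c\<in>Obj C. \<forall>d\<in>Obj C.
        Comp C (Assoc C a b (TOb C c d)) (Assoc C (TOb C a b) c d) =
        Comp C (Tens C (Ide C a) (Assoc C b c d))
          (Comp C (Assoc C a (TOb C b c) d) (Tens C (Assoc C a b c) (Ide C d)))) \<and>
     (\<forall>a\<in>Obj C. \<forall>b\<in>Obj C.
        Comp C (Tens C (Ide C a) (LUnit C b)) (Assoc C a (Unit C) b) = Tens C (RUnit C a) (Ide C b))"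

definition tensor_additive :: "('o, 'm, 'x) moncat_scheme \<Rightarrow> bool" where
  "tensor_additive C \<longleftrightarrow>
     (\<forall>f\<in>Arr C. \<forall>g\<in>Arr C. \<forall>h\<in>Arr C. Dom C f = Dom C g \<longrightarrow> Cod C f = Cod C g \<longrightarrow>
        Tens C (Add C f g) h = Add C (Tens C f h) (Tens C g h) \<and>
        Tens C h (Add C f g) = Add C (Tens C h f) (Tens C h g))"

definition monoidal_additive_category :: "('o, 'm, 'x) moncat_scheme \<Rightarrow> bool" where
  "monoidal_additive_category C \<longleftrightarrow>
     is_category C \<and> ab_enriched C \<and> has_finite_biproducts C \<and> is_monoidal C \<and>
     tensor_additive C \<and> has_finite_limits C \<and> has_finite_colimits C"

definition is_monoid :: "('o, 'm, 'x) moncat_scheme \<Rightarrow> 'o \<Rightarrow> 'm \<Rightarrow> 'm \<Rightarrow> bool" where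
  "is_monoid C A m i \<longleftrightarrow>
     A \<in> Obj C \<and> m \<in> Hom C (TOb C A A) A \<and> i \<in> Hom C (Unit C) A \<and>
     Comp C m (Tens C m (Ide C A)) = Comp C m (Comp C (Tens C (Ide C A) m) (Assoc C A A A)) \<and>
     Comp C m (Tens C i (Ide C A)) = LUnit C A \<and>
     Comp C m (Tens C (Ide C A) i) = RUnit C A"

definition is_bimodule ::
  "('o, 'm, 'x) moncat_scheme \<Rightarrow> 'o \<Rightarrow> 'm \<Rightarrow> 'm \<Rightarrow> 'o \<Rightarrow> 'm \<Rightarrow> 'm \<Rightarrow> bool" where
  "is_bimodule C A m i M \<mu> \<nu> \<longleftrightarrow>
     M \<in> Obj C \<and> \<mu> \<in> Hom C (TOb C A M) M \<and> \<nu> \<in> Hom C (TOb C M A) M \<and>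
     Comp C \<mu> (Tens C m (Ide C M)) = Comp C \<mu> (Comp C (Tens C (Ide C A) \<mu>) (Assoc C A A M)) \<and>
     Comp C \<mu> (Tens C i (Ide C M)) = LUnit C M \<and>
     Comp C \<nu> (Tens C \<nu> (Ide C A)) = Comp C \<nu> (Comp C (Tens C (Ide C M) m) (Assoc C M A A)) \<and>
     Comp C \<nu> (Tens C (Ide C M) i) = RUnit C M \<and>
     Comp C \<nu> (Tens C \<mu> (Ide C A)) = Comp C \<mu> (Comp C (Tens C (Ide C A) \<nu>) (Assoc C A M A))"

end

theory Submission
  imports Defs
begin

text \<open>
  An epimorphism \<open>X\<close> transfers to any \<open>Y\<close> with the same codomain such that every pair
  \<open>g, h\<close> equalized by \<open>Y\<close> is also equalized by \<open>X\<close>; so it suffices to compare which pairs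
  the three morphisms equalize.  Precomposition with \<open>1 \<otimes> i\<close> (resp. \<open>i \<otimes> 1\<close>) turns
  \<open>d \<cdot> 1\<^sub>A\<close> (resp. \<open>1\<^sub>A \<cdot> d\<close>) into \<open>d\<close> followed by a unitor, and unitors are invertible;
  hence a pair equalized by either of them is equalized by \<open>d\<close>, and then by the Leibniz rule
  \<open>g d m = g (d \<cdot> 1\<^sub>A) + g (1\<^sub>A \<cdot> d)\<close> it is equalized by both.  In the same way
  \<open>(1\<^sub>A \<cdot> d \<cdot> 1\<^sub>A)(1 \<otimes> i) = (1\<^sub>A \<cdot> d) \<rho>\<close>, while the Leibniz rule and associativity of the
  right action give \<open>(d \<cdot> 1\<^sub>A)(m \<otimes> 1) = (d \<cdot> 1\<^sub>A)(1 \<otimes> m)\<alpha> + 1\<^sub>A \<cdot> d \<cdot> 1\<^sub>A\<close>.  This yields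
  (i) \<open>\<Leftrightarrow>\<close> (ii) and (i) \<open>\<Rightarrow>\<close> (iii) \<open>\<Rightarrow>\<close> (ii).
\<close>

locale monoidal_additive =
  fixes C :: "('o, 'm) moncat"
  assumes monoidal_additive: "monoidal_additive_category C"
begin

lemma category: "is_category C"
  and enriched: "ab_enriched C"
  and monoidal: "is_monoidal C"
  and additive_tensor: "tensor_additive C"
  using monoidal_additive by (simp_all add: monoidal_additive_category_def)

lemma in_HomD:
  assumes "f \<in> Hom C a b"
  shows "f \<in> Arr C" and "Dom C f = a" and "Cod C f = b"
  using assms by (simp_all add: Hom_def)

lemma arr_in_Hom: "f \<in> Arr C \<Longrightarrow> f \<in> Hom C (Dom C f) (Cod C f)"
  by (simp add: Hom_def)

lemma in_Hom_obj:
  assumes "f \<in> Hom C a b"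
  shows "a \<in> Obj C" and "b \<in> Obj C"
  using assms category by (auto simp: Hom_def is_category_def)

lemma ide_in_Hom: "a \<in> Obj C \<Longrightarrow> Ide C a \<in> Hom C a a"
  using category by (simp add: is_category_def)

lemma comp_in_Hom: "f \<in> Hom C a b \<Longrightarrow> g \<in> Hom C b c \<Longrightarrow> Comp C g f \<in> Hom C a c"
  using category by (auto simp: is_category_def Hom_def)

lemma comp_assoc:
  "f \<in> Hom C a b \<Longrightarrow> g \<in> Hom C b c \<Longrightarrow> h \<in> Hom C c e \<Longrightarrow>
   Comp C h (Comp C g f) = Comp C (Comp C h g) f"
  using category by (auto simp: is_category_def Hom_def)

lemma comp_ide_left: "f \<in> Hom C a b \<Longrightarrow> Comp C (Ide C b) f = f"
  and comp_ide_right: "f \<in> Hom C a b \<Longrightarrow> Comp C f (Ide C a) = f"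
  using category by (auto simp: is_category_def Hom_def)

lemma unit_obj: "Unit C \<in> Obj C"
  and tensor_obj: "a \<in> Obj C \<Longrightarrow> b \<in> Obj C \<Longrightarrow> TOb C a b \<in> Obj C"
  and tens_in_Hom:
    "f \<in> Hom C a b \<Longrightarrow> g \<in> Hom C c e \<Longrightarrow> Tens C f g \<in> Hom C (TOb C a c) (TOb C b e)"
  and tens_ide: "a \<in> Obj C \<Longrightarrow> b \<in> Obj C \<Longrightarrow> Tens C (Ide C a) (Ide C b) = Ide C (TOb C a b)"
  using monoidal by (auto simp: is_monoidal_def Hom_def)

lemma interchange:
  "f \<in> Hom C a b \<Longrightarrow> g \<in> Hom C b c \<Longrightarrow> h \<in> Hom C a' b' \<Longrightarrow> k \<in> Hom C b' c' \<Longrightarrow>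
   Tens C (Comp C g f) (Comp C k h) = Comp C (Tens C g k) (Tens C f h)"
  using monoidal by (auto simp: is_monoidal_def Hom_def)

lemma assoc_in_Hom: "a \<in> Obj C \<Longrightarrow> b \<in> Obj C \<Longrightarrow> c \<in> Obj C \<Longrightarrow>
    Assoc C a b c \<in> Hom C (TOb C (TOb C a b) c) (TOb C a (TOb C b c))"
  and lunit_in_Hom: "a \<in> Obj C \<Longrightarrow> LUnit C a \<in> Hom C (TOb C (Unit C) a) a"
  and runit_in_Hom: "a \<in> Obj C \<Longrightarrow> RUnit C a \<in> Hom C (TOb C a (Unit C)) a"
  and lunit_iso: "a \<in> Obj C \<Longrightarrow> is_iso C (LUnit C a)"
  and runit_iso: "a \<in> Obj C \<Longrightarrow> is_iso C (RUnit C a)"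
  using monoidal by (auto simp: is_monoidal_def)

lemma assoc_naturality:
  "f \<in> Hom C a a' \<Longrightarrow> g \<in> Hom C b b' \<Longrightarrow> h \<in> Hom C c c' \<Longrightarrow>
   Comp C (Assoc C a' b' c') (Tens C (Tens C f g) h) = Comp C (Tens C f (Tens C g h)) (Assoc C a b c)"
  and lunit_naturality: "f \<in> Hom C a b \<Longrightarrow>
   Comp C (LUnit C b) (Tens C (Ide C (Unit C)) f) = Comp C f (LUnit C a)"
  and runit_naturality: "f \<in> Hom C a b \<Longrightarrow>
   Comp C (RUnit C b) (Tens C f (Ide C (Unit C))) = Comp C f (RUnit C a)"
  using monoidal by (auto simp: is_monoidal_def Hom_def)

lemma tens_ide_comp:
  assumes f: "f \<in> Hom C a b" and g: "g \<in> Hom C c e"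
  shows "Comp C (Tens C f (Ide C e)) (Tens C (Ide C a) g) = Tens C f g"
    and "Comp C (Tens C (Ide C b) g) (Tens C f (Ide C c)) = Tens C f g"
  using interchange[OF ide_in_Hom f g ide_in_Hom] interchange[OF f ide_in_Hom ide_in_Hom g]
    in_Hom_obj[OF f] in_Hom_obj[OF g] comp_ide_left[OF f] comp_ide_right[OF f]
    comp_ide_left[OF g] comp_ide_right[OF g]
  by simp_all

lemma tens_comp_ide:
  assumes "f \<in> Hom C a b" and "g \<in> Hom C b c" and "e \<in> Obj C"
  shows "Comp C (Tens C g (Ide C e)) (Tens C f (Ide C e)) = Tens C (Comp C g f) (Ide C e)"
  using interchange[OF assms(1,2) ide_in_Hom[OF assms(3)] ide_in_Hom[OF assms(3)]]
    comp_ide_left[OF ide_in_Hom[OF assms(3)]]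
  by simp

lemma assoc_naturality_left:
  assumes f: "f \<in> Hom C a a'" and k: "k \<in> Hom C (TOb C b c) e"
    and b: "b \<in> Obj C" and c: "c \<in> Obj C"
  shows "Comp C (Tens C (Ide C a') k) (Comp C (Assoc C a' b c) (Tens C (Tens C f (Ide C b)) (Ide C c)))
       = Comp C (Tens C f k) (Assoc C a b c)"
proof -
  have a: "a \<in> Obj C" "a' \<in> Obj C" using in_Hom_obj[OF f] .
  have "Comp C (Assoc C a' b c) (Tens C (Tens C f (Ide C b)) (Ide C c))
      = Comp C (Tens C f (Ide C (TOb C b c))) (Assoc C a b c)"
    using assoc_naturality[OF f ide_in_Hom[OF b] ide_in_Hom[OF c]] tens_ide[OF b c] by simp
  moreover have "Comp C (Tens C (Ide C a') k) (Tens C f (Ide C (TOb C b c))) = Tens C f k"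
    using tens_ide_comp(2)[OF f k] .
  ultimately show ?thesis
    using comp_assoc[OF assoc_in_Hom[OF a(1) b c] tens_in_Hom[OF f ide_in_Hom[OF tensor_obj[OF b c]]]
        tens_in_Hom[OF ide_in_Hom[OF a(2)] k]]
    by simp
qed

lemma add_commute: "f \<in> Hom C a b \<Longrightarrow> g \<in> Hom C a b \<Longrightarrow> Add C f g = Add C g f"
  and comp_add: "f \<in> Hom C a b \<Longrightarrow> f' \<in> Hom C a b \<Longrightarrow> g \<in> Hom C b c \<Longrightarrow>
     Comp C g (Add C f f') = Add C (Comp C g f) (Comp C g f')"
  using enriched in_Hom_obj unfolding ab_enriched_def by blast+

lemma add_right_cancel:
  assumes x: "x \<in> Hom C a b" and y: "y \<in> Hom C a b" and z: "z \<in> Hom C a b"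
    and "Add C x z = Add C y z"
  shows "x = y"
proof -
  have ab: "a \<in> Obj C" "b \<in> Obj C" using in_Hom_obj[OF x] .
  then have assoc: "\<And>f g h. f \<in> Hom C a b \<Longrightarrow> g \<in> Hom C a b \<Longrightarrow> h \<in> Hom C a b \<Longrightarrow>
      Add C (Add C f g) h = Add C f (Add C g h)"
    and zero: "\<And>f. f \<in> Hom C a b \<Longrightarrow> Add C f (Zm C a b) = f"
    and neg: "Add C z (Neg C z) = Zm C a b" "Neg C z \<in> Hom C a b"
    using enriched z unfolding ab_enriched_def by blast+
  have "x = Add C (Add C x z) (Neg C z)" using assoc[OF x z neg(2)] zero[OF x] neg(1) by simp
  also have "\<dots> = Add C (Add C y z) (Neg C z)" using assms(4) by simp
  also have "\<dots> = y" using assoc[OF y z neg(2)] zero[OF y] neg(1) by simp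
  finally show ?thesis .
qed

lemma tens_add_left: "f \<in> Hom C a b \<Longrightarrow> g \<in> Hom C a b \<Longrightarrow> h \<in> Arr C \<Longrightarrow>
   Tens C (Add C f g) h = Add C (Tens C f h) (Tens C g h)"
  using additive_tensor by (auto simp: tensor_additive_def Hom_def)

lemma iso_is_epi:
  assumes "is_iso C f"
  shows "is_epi C f"
  unfolding is_epi_def
proof (intro conjI ballI impI)
  obtain u where u: "u \<in> Hom C (Cod C f) (Dom C f)" "Comp C f u = Ide C (Cod C f)"
    and f: "f \<in> Arr C"
    using assms unfolding is_iso_def by blast
  show "f \<in> Arr C" by (fact f)
  fix g h
  assume g: "g \<in> Arr C" and h: "h \<in> Arr C" and "Dom C g = Cod C f" "Dom C h = Cod C f"
    and "Cod C g = Cod C h" and gh: "Comp C g f = Comp C h f"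
  then have g': "g \<in> Hom C (Cod C f) (Cod C g)" and h': "h \<in> Hom C (Cod C f) (Cod C g)"
    by (auto simp: Hom_def)
  have "g = Comp C (Comp C g f) u"
    using comp_assoc[OF u(1) arr_in_Hom[OF f] g'] u(2) comp_ide_right[OF g'] by simp
  also have "\<dots> = h"
    using comp_assoc[OF u(1) arr_in_Hom[OF f] h'] u(2) comp_ide_right[OF h'] gh by simp
  finally show "g = h" .
qed

lemma epi_cancel:
  "is_epi C e \<Longrightarrow> e \<in> Hom C a b \<Longrightarrow> g \<in> Hom C b c \<Longrightarrow> h \<in> Hom C b c \<Longrightarrow>
   Comp C g e = Comp C h e \<Longrightarrow> g = h"
  by (auto simp: is_epi_def Hom_def)

lemma comp_eq_through_epi:
  assumes "is_epi C e" "e \<in> Hom C a b" "Y \<in> Hom C b c" "u \<in> Hom C a x" "X \<in> Hom C x c"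
    and factor: "Comp C X u = Comp C Y e"
    and g: "g \<in> Hom C c z" and h: "h \<in> Hom C c z" and "Comp C g X = Comp C h X"
  shows "Comp C g Y = Comp C h Y"
proof (rule epi_cancel[OF assms(1,2)])
  show "Comp C g Y \<in> Hom C b z" "Comp C h Y \<in> Hom C b z"
    using comp_in_Hom assms(3) g h by blast+
  have "Comp C (Comp C g Y) e = Comp C (Comp C g X) u"
    using comp_assoc[OF assms(2,3) g] comp_assoc[OF assms(4,5) g] factor by simp
  also have "\<dots> = Comp C (Comp C h Y) e"
    using comp_assoc[OF assms(2,3) h] comp_assoc[OF assms(4,5) h] factor assms(9) by simp
  finally show "Comp C (Comp C g Y) e = Comp C (Comp C h Y) e" .
qed

lemma is_epi_transfer:
  assumes "is_epi C X" "X \<in> Hom C a b" "Y \<in> Hom C a' b"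
    and equalizes: "\<And>g h c. g \<in> Hom C b c \<Longrightarrow> h \<in> Hom C b c \<Longrightarrow>
      Comp C g Y = Comp C h Y \<Longrightarrow> Comp C g X = Comp C h X"
  shows "is_epi C Y"
  unfolding is_epi_def
proof (intro conjI ballI impI)
  show "Y \<in> Arr C" using in_HomD(1)[OF assms(3)] .
  fix g h
  assume "g \<in> Arr C" "h \<in> Arr C" "Dom C g = Cod C Y" "Dom C h = Cod C Y" "Cod C g = Cod C h"
    and gh: "Comp C g Y = Comp C h Y"
  then have "g \<in> Hom C b (Cod C g)" "h \<in> Hom C b (Cod C g)"
    using in_HomD(3)[OF assms(3)] by (auto simp: Hom_def)
  then show "g = h"
    using epi_cancel[OF assms(1,2)] equalizes gh by blast
qed

end

locale bimodule_action = monoidal_additive C for C :: "('o, 'm) moncat" +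
  fixes A :: 'o and m i :: 'm and M :: 'o and \<mu> \<nu> :: 'm
  assumes monoid: "is_monoid C A m i"
    and bimodule: "is_bimodule C A m i M \<mu> \<nu>"
begin

text \<open>In the notation of the paper, \<open>lact f\<close> is \<open>1\<^sub>A \<cdot> f\<close> and \<open>ract f\<close> is \<open>f \<cdot> 1\<^sub>A\<close>.\<close>

abbreviation lact :: "'m \<Rightarrow> 'm" where "lact f \<equiv> Comp C \<mu> (Tens C (Ide C A) f)"
abbreviation ract :: "'m \<Rightarrow> 'm" where "ract f \<equiv> Comp C \<nu> (Tens C f (Ide C A))"

lemma A_obj: "A \<in> Obj C"
  and mult_in_Hom: "m \<in> Hom C (TOb C A A) A"
  and unit_in_Hom: "i \<in> Hom C (Unit C) A"
  using monoid by (simp_all add: is_monoid_def)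

lemma M_obj: "M \<in> Obj C"
  and left_action_in_Hom: "\<mu> \<in> Hom C (TOb C A M) M"
  and right_action_in_Hom: "\<nu> \<in> Hom C (TOb C M A) M"
  and left_action_unit: "Comp C \<mu> (Tens C i (Ide C M)) = LUnit C M"
  and right_action_unit: "Comp C \<nu> (Tens C (Ide C M) i) = RUnit C M"
  and right_action_assoc: "Comp C \<nu> (Tens C \<nu> (Ide C A)) = Comp C \<nu> (Comp C (Tens C (Ide C M) m) (Assoc C M A A))"
  using bimodule by (simp_all add: is_bimodule_def)

lemma lact_in_Hom: "f \<in> Hom C X M \<Longrightarrow> lact f \<in> Hom C (TOb C A X) M"
  and ract_in_Hom: "f \<in> Hom C X M \<Longrightarrow> ract f \<in> Hom C (TOb C X A) M"
  using comp_in_Hom tens_in_Hom ide_in_Hom[OF A_obj] left_action_in_Hom right_action_in_Hom by blast+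

lemma ract_comp:
  assumes f: "f \<in> Hom C X Y" and g: "g \<in> Hom C Y M"
  shows "Comp C (ract g) (Tens C f (Ide C A)) = ract (Comp C g f)"
  using comp_assoc[OF tens_in_Hom[OF f ide_in_Hom] tens_in_Hom[OF g ide_in_Hom] right_action_in_Hom]
    tens_comp_ide[OF f g A_obj] A_obj
  by simp

lemma ract_add: "f \<in> Hom C X M \<Longrightarrow> g \<in> Hom C X M \<Longrightarrow> ract (Add C f g) = Add C (ract f) (ract g)"
  using tens_add_left[OF _ _ in_HomD(1)[OF ide_in_Hom[OF A_obj]]]
    comp_add[OF tens_in_Hom tens_in_Hom right_action_in_Hom] ide_in_Hom[OF A_obj]
  by simp

lemma ract_unit:
  assumes f: "f \<in> Hom C X M"
  shows "Comp C (ract f) (Tens C (Ide C X) i) = Comp C f (RUnit C X)"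
proof -
  have IA: "Ide C A \<in> Hom C A A" and IU: "Ide C (Unit C) \<in> Hom C (Unit C) (Unit C)"
    using ide_in_Hom A_obj unit_obj by blast+
  have "Comp C (ract f) (Tens C (Ide C X) i) = Comp C \<nu> (Tens C f i)"
    using comp_assoc[OF tens_in_Hom[OF ide_in_Hom[OF in_Hom_obj(1)[OF f]] unit_in_Hom]
        tens_in_Hom[OF f IA] right_action_in_Hom] tens_ide_comp(1)[OF f unit_in_Hom]
    by simp
  also have "\<dots> = Comp C (Comp C \<nu> (Tens C (Ide C M) i)) (Tens C f (Ide C (Unit C)))"
    using comp_assoc[OF tens_in_Hom[OF f IU] tens_in_Hom[OF ide_in_Hom[OF M_obj] unit_in_Hom]
        right_action_in_Hom] tens_ide_comp(2)[OF f unit_in_Hom]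
    by simp
  also have "\<dots> = Comp C f (RUnit C X)"
    using right_action_unit runit_naturality[OF f] by simp
  finally show ?thesis .
qed

lemma lact_unit:
  assumes f: "f \<in> Hom C X M"
  shows "Comp C (lact f) (Tens C i (Ide C X)) = Comp C f (LUnit C X)"
proof -
  have IA: "Ide C A \<in> Hom C A A" and IU: "Ide C (Unit C) \<in> Hom C (Unit C) (Unit C)"
    using ide_in_Hom A_obj unit_obj by blast+
  have "Comp C (lact f) (Tens C i (Ide C X)) = Comp C \<mu> (Tens C i f)"
    using comp_assoc[OF tens_in_Hom[OF unit_in_Hom ide_in_Hom[OF in_Hom_obj(1)[OF f]]]
        tens_in_Hom[OF IA f] left_action_in_Hom] tens_ide_comp(2)[OF unit_in_Hom f]
    by simp
  also have "\<dots> = Comp C (Comp C \<mu> (Tens C i (Ide C M))) (Tens C (Ide C (Unit C)) f)"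
    using comp_assoc[OF tens_in_Hom[OF IU f] tens_in_Hom[OF unit_in_Hom ide_in_Hom[OF M_obj]]
        left_action_in_Hom] tens_ide_comp(1)[OF unit_in_Hom f]
    by simp
  also have "\<dots> = Comp C f (LUnit C X)"
    using left_action_unit lunit_naturality[OF f] by simp
  finally show ?thesis .
qed

lemma ract_ract:
  assumes f: "f \<in> Hom C X M"
  shows "ract (ract f) = Comp C (ract f) (Comp C (Tens C (Ide C X) m) (Assoc C X A A))"
proof -
  have X: "X \<in> Obj C" using in_Hom_obj(1)[OF f] .
  have IA: "Ide C A \<in> Hom C A A" using ide_in_Hom[OF A_obj] .
  have fAA: "Tens C (Tens C f (Ide C A)) (Ide C A) \<in> Hom C (TOb C (TOb C X A) A) (TOb C (TOb C M A) A)"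
    using tens_in_Hom[OF tens_in_Hom[OF f IA] IA] .
  have assoc_M: "Assoc C M A A \<in> Hom C (TOb C (TOb C M A) A) (TOb C M (TOb C A A))"
    and assoc_X: "Assoc C X A A \<in> Hom C (TOb C (TOb C X A) A) (TOb C X (TOb C A A))"
    using assoc_in_Hom A_obj M_obj X by blast+
  have Mm: "Tens C (Ide C M) m \<in> Hom C (TOb C M (TOb C A A)) (TOb C M A)"
    and Xm: "Tens C (Ide C X) m \<in> Hom C (TOb C X (TOb C A A)) (TOb C X A)"
    using tens_in_Hom ide_in_Hom mult_in_Hom M_obj X by blast+
  have "ract (ract f) = Comp C (Comp C \<nu> (Tens C \<nu> (Ide C A))) (Tens C (Tens C f (Ide C A)) (Ide C A))"
    using ract_comp[OF tens_in_Hom[OF f IA] right_action_in_Hom] by simp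
  also have "\<dots> = Comp C \<nu> (Comp C (Tens C (Ide C M) m)
      (Comp C (Assoc C M A A) (Tens C (Tens C f (Ide C A)) (Ide C A))))"
    using right_action_assoc comp_assoc[OF fAA comp_in_Hom[OF assoc_M Mm] right_action_in_Hom]
      comp_assoc[OF fAA assoc_M Mm] by simp
  also have "\<dots> = Comp C \<nu> (Comp C (Tens C f m) (Assoc C X A A))"
    using assoc_naturality_left[OF f mult_in_Hom A_obj A_obj] by simp
  also have "\<dots> = Comp C (ract f) (Comp C (Tens C (Ide C X) m) (Assoc C X A A))"
    using tens_ide_comp(1)[OF f mult_in_Hom] comp_assoc[OF assoc_X Xm tens_in_Hom[OF f IA]]
      comp_assoc[OF comp_in_Hom[OF assoc_X Xm] tens_in_Hom[OF f IA] right_action_in_Hom] by simp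
  finally show ?thesis .
qed

end

locale derivation = bimodule_action C A m i M \<mu> \<nu>
  for C :: "('o, 'm) moncat" and A m i M \<mu> \<nu> +
  fixes d :: 'm
  assumes d_in_Hom: "d \<in> Hom C A M"
    and leibniz: "Comp C d m = Add C (ract d) (lact d)"
begin

lemma ract_mult:
  "Comp C (ract d) (Tens C m (Ide C A))
     = Add C (Comp C (ract d) (Comp C (Tens C (Ide C A) m) (Assoc C A A A))) (ract (lact d))"
  using ract_comp[OF mult_in_Hom d_in_Hom] leibniz
    ract_add[OF ract_in_Hom[OF d_in_Hom] lact_in_Hom[OF d_in_Hom]]
    ract_ract[OF d_in_Hom]
  by simp

context
  fixes g h c
  assumes g: "g \<in> Hom C M c" and h: "h \<in> Hom C M c"
begin

lemma eq_d_of_eq_ract: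
  "Comp C g (ract d) = Comp C h (ract d) \<Longrightarrow> Comp C g d = Comp C h d"
  using comp_eq_through_epi[OF iso_is_epi[OF runit_iso[OF A_obj]] runit_in_Hom[OF A_obj] d_in_Hom
      tens_in_Hom[OF ide_in_Hom[OF A_obj] unit_in_Hom] ract_in_Hom[OF d_in_Hom]
      ract_unit[OF d_in_Hom] g h] .

lemma eq_d_of_eq_lact:
  "Comp C g (lact d) = Comp C h (lact d) \<Longrightarrow> Comp C g d = Comp C h d"
  using comp_eq_through_epi[OF iso_is_epi[OF lunit_iso[OF A_obj]] lunit_in_Hom[OF A_obj] d_in_Hom
      tens_in_Hom[OF unit_in_Hom ide_in_Hom[OF A_obj]] lact_in_Hom[OF d_in_Hom]
      lact_unit[OF d_in_Hom] g h] .

lemma eq_lact_iff_eq_ract: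
  assumes "Comp C g d = Comp C h d"
  shows "Comp C g (lact d) = Comp C h (lact d) \<longleftrightarrow> Comp C g (ract d) = Comp C h (ract d)"
proof -
  have L: "\<And>k. k \<in> Hom C M c \<Longrightarrow> Comp C k (lact d) \<in> Hom C (TOb C A A) c"
    and R: "\<And>k. k \<in> Hom C M c \<Longrightarrow> Comp C k (ract d) \<in> Hom C (TOb C A A) c"
    using comp_in_Hom lact_in_Hom ract_in_Hom d_in_Hom by blast+
  have sum: "\<And>k. k \<in> Hom C M c \<Longrightarrow>
      Comp C (Comp C k d) m = Add C (Comp C k (ract d)) (Comp C k (lact d))"
    using comp_assoc[OF mult_in_Hom d_in_Hom] comp_add[OF ract_in_Hom lact_in_Hom]
      d_in_Hom leibniz by metis
  have "Add C (Comp C g (ract d)) (Comp C g (lact d)) = Add C (Comp C h (ract d)) (Comp C h (lact d))"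
    using sum[OF g] sum[OF h] assms by simp
  then show ?thesis
    using add_right_cancel[OF L[OF g] L[OF h] R[OF g]] add_right_cancel[OF R[OF g] R[OF h] L[OF g]]
      add_commute[OF R[OF g] L[OF g]] add_commute[OF R[OF h] L[OF h]]
    by metis
qed

lemma eq_lact_of_eq_ract_lact:
  "Comp C g (ract (lact d)) = Comp C h (ract (lact d)) \<Longrightarrow> Comp C g (lact d) = Comp C h (lact d)"
  using comp_eq_through_epi[OF iso_is_epi[OF runit_iso[OF tensor_obj[OF A_obj A_obj]]]
      runit_in_Hom[OF tensor_obj[OF A_obj A_obj]] lact_in_Hom[OF d_in_Hom]
      tens_in_Hom[OF ide_in_Hom[OF tensor_obj[OF A_obj A_obj]] unit_in_Hom]
      ract_in_Hom[OF lact_in_Hom[OF d_in_Hom]]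
      ract_unit[OF lact_in_Hom[OF d_in_Hom]] g h] .

lemma eq_ract_lact_of_eq_ract:
  assumes "Comp C g (ract d) = Comp C h (ract d)"
  shows "Comp C g (ract (lact d)) = Comp C h (ract (lact d))"
proof -
  let ?a = "Comp C (Tens C (Ide C A) m) (Assoc C A A A)"
  have a: "?a \<in> Hom C (TOb C (TOb C A A) A) (TOb C A A)"
    using comp_in_Hom assoc_in_Hom tens_in_Hom ide_in_Hom mult_in_Hom A_obj by blast
  have mA: "Tens C m (Ide C A) \<in> Hom C (TOb C (TOb C A A) A) (TOb C A A)"
    using tens_in_Hom mult_in_Hom ide_in_Hom A_obj by blast
  have R: "ract d \<in> Hom C (TOb C A A) M" and T: "ract (lact d) \<in> Hom C (TOb C (TOb C A A) A) M"
    using ract_in_Hom lact_in_Hom d_in_Hom by blast+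
  have split: "\<And>k. k \<in> Hom C M c \<Longrightarrow> Comp C (Comp C k (ract d)) (Tens C m (Ide C A))
      = Add C (Comp C (Comp C k (ract d)) ?a) (Comp C k (ract (lact d)))"
    using ract_mult comp_assoc[OF mA R] comp_assoc[OF a R] comp_add[OF comp_in_Hom[OF a R] T]
    by metis
  have TR: "\<And>k. k \<in> Hom C M c \<Longrightarrow> Comp C k (ract (lact d)) \<in> Hom C (TOb C (TOb C A A) A) c"
    and RA: "\<And>k. k \<in> Hom C M c \<Longrightarrow> Comp C (Comp C k (ract d)) ?a \<in> Hom C (TOb C (TOb C A A) A) c"
    using comp_in_Hom[OF T] comp_in_Hom[OF a comp_in_Hom[OF R]] by blast+
  show ?thesis
    using split[OF g] split[OF h] assms add_commute[OF RA[OF g] TR[OF g]] add_commute[OF RA[OF h] TR[OF h]]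
      add_right_cancel[OF TR[OF g] TR[OF h] RA[OF g]]
    by metis
qed

end

end

theorem proposition3p5:
  fixes C :: "('o, 'm) moncat"
    and A M :: 'o and m i \<mu> \<nu> d :: 'm
  assumes "monoidal_additive_category C"
    and "is_monoid C A m i"
    and "is_bimodule C A m i M \<mu> \<nu>"
    and "d \<in> Hom C A M"
    and leibniz: "Comp C d m =
           Add C (Comp C \<nu> (Tens C d (Ide C A))) (Comp C \<mu> (Tens C (Ide C A) d))"
  shows "(is_epi C (Comp C \<mu> (Tens C (Ide C A) d))
            \<longleftrightarrow> is_epi C (Comp C \<nu> (Tens C d (Ide C A))))
       \<and> (is_epi C (Comp C \<mu> (Tens C (Ide C A) d))
            \<longleftrightarrow> is_epi C (Comp C \<nu> (Tens C (Comp C \<mu> (Tens C (Ide C A) d)) (Ide C A))))"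
proof -
  interpret derivation C A m i M \<mu> \<nu> d
    using assms by unfold_locales
  have Ad: "lact d \<in> Hom C (TOb C A A) M" and dA: "ract d \<in> Hom C (TOb C A A) M"
    and AdA: "ract (lact d) \<in> Hom C (TOb C (TOb C A A) A) M"
    using lact_in_Hom ract_in_Hom d_in_Hom by blast+
  have "is_epi C (lact d) \<Longrightarrow> is_epi C (ract d)"
    using is_epi_transfer[OF _ Ad dA] eq_lact_iff_eq_ract eq_d_of_eq_ract by blast
  moreover have "is_epi C (ract d) \<Longrightarrow> is_epi C (lact d)"
    using is_epi_transfer[OF _ dA Ad] eq_lact_iff_eq_ract eq_d_of_eq_lact by blast
  moreover have "is_epi C (lact d) \<Longrightarrow> is_epi C (ract (lact d))"
    using is_epi_transfer[OF _ Ad AdA] eq_lact_of_eq_ract_lact by blast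
  moreover have "is_epi C (ract (lact d)) \<Longrightarrow> is_epi C (ract d)"
    using is_epi_transfer[OF _ AdA dA] eq_ract_lact_of_eq_ract by blast
  ultimately show ?thesis by blast
qed

end
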